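(* Let $T\ge1$ and $0<\eta\le\frac{1}{5\sqrt T}$, and suppose $d:=\max\{25\eta^2T^2,1\}$ is a positive integer. Let $f(w)=\max\{0,\max_{i\in[d]}(\frac{1}{\sqrt d}-w[i]-\frac{\eta i}{4d})\}$ on $\mathbb R^d$ and run unprojected GD $w_1=0$, $w_{t+1}=w_t-\eta\nabla f(w_t)$ for $1\le t<T$. Then (i) $w_t\in\mathbb B^d$ (the closed unit ball) for all $t\in[T]$; and (ii) for every $m\in\{1,\dots,T\}$, the suffix average $w_{T,m}=\frac1m\sum_{i=1}^m w_{T-i+1}$ satisfies $$f(w_{T,m})-\inf_{w\in\mathbb R^d}f(w)\ \ge\ \min\Big\{\frac14,\ \frac{1}{20\eta T}\Big\}.$$
   Context: $w[i]$ denotes the $i$-th coordinate of $w$. *)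

theory Defs
  imports Complex_Main
begin

text \<open>Vectors in R^d are represented as functions nat => real; only the
coordinates 1..d are relevant (w[i] = w i).\<close>

definition hpiece :: "nat \<Rightarrow> real \<Rightarrow> (nat \<Rightarrow> real) \<Rightarrow> nat \<Rightarrow> real" where
  "hpiece d \<eta> w i = 1 / sqrt (real d) - w i - \<eta> * real i / (4 * real d)"

definition hardf :: "nat \<Rightarrow> real \<Rightarrow> (nat \<Rightarrow> real) \<Rightarrow> real" where
  "hardf d \<eta> w = max 0 (Max (hpiece d \<eta> w ` {1..d}))"

definition hardgrad :: "nat \<Rightarrow> real \<Rightarrow> (nat \<Rightarrow> real) \<Rightarrow> (nat \<Rightarrow> real)" where
  "hardgrad d \<eta> w =
     (let M = Max (hpiece d \<eta> w ` {1..d});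
          k = (LEAST i. i \<in> {1..d} \<and> hpiece d \<eta> w i = M)
      in if M > 0 then (\<lambda>i. if i = k then -1 else 0) else (\<lambda>_. 0))"

definition eucl_norm :: "nat \<Rightarrow> (nat \<Rightarrow> real) \<Rightarrow> real" where
  "eucl_norm d w = sqrt (\<Sum>i=1..d. (w i)^2)"

end

theory Submission
  imports Defs
begin

text \<open>Gradient descent from the origin increments the coordinates of \<open>w\<close> cyclically in the order
  \<open>1, 2, \<dots>, d, 1, 2, \<dots>\<close>: after \<open>s\<close> effective steps the largest piece of \<open>f\<close> is the one at
  coordinate \<open>s mod d + 1\<close>, which has been incremented least often and among the least incremented
  carries the smallest offset.  Hence every coordinate is at most \<open>\<eta> (s div d + 1)\<close>, which keeps the
  iterates in the unit ball, while the last coordinate is at most \<open>\<eta> (T - 1) / d\<close> for every iterate,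
  hence also for every suffix average.  The piece of \<open>f\<close> at coordinate \<open>d\<close> then stays above
  \<open>1/\<surd>d - \<eta>(T - 1)/d - \<eta>/4\<close>, whereas \<open>inf f = 0\<close>.\<close>

definition cyclic_count :: "nat \<Rightarrow> nat \<Rightarrow> nat \<Rightarrow> nat" where
  "cyclic_count d s i = s div d + (if i \<le> s mod d then 1 else 0)"

definition cyclic_point :: "nat \<Rightarrow> real \<Rightarrow> nat \<Rightarrow> nat \<Rightarrow> real" where
  "cyclic_point d \<eta> s = (\<lambda>i. if i \<in> {1..d} then \<eta> * real (cyclic_count d s i) else 0)"

lemma cyclic_count_Suc:
  assumes "i \<in> {1..d}"
  shows "cyclic_count d (Suc s) i = cyclic_count d s i + (if i = s mod d + 1 then 1 else 0)"
proof -
  have "s mod d < d" using assms by simp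
  then show ?thesis using assms
    unfolding cyclic_count_def by (auto simp: div_Suc mod_Suc)
qed

lemma hpiece_cyclic_point_less:
  assumes "\<eta> > 0" "i \<in> {1..d}" "i \<noteq> s mod d + 1"
  shows "hpiece d \<eta> (cyclic_point d \<eta> s) i < hpiece d \<eta> (cyclic_point d \<eta> s) (s mod d + 1)"
proof -
  define q r where "q = s div d" and "r = s mod d"
  have rd: "r < d" and dpos: "real d > 0" using assms unfolding r_def by auto
  have next_piece: "hpiece d \<eta> (cyclic_point d \<eta> s) (r + 1)
      = 1 / sqrt d - \<eta> * real q - \<eta> * real (r + 1) / (4 * real d)"
    using rd unfolding hpiece_def cyclic_point_def cyclic_count_def q_def r_def by auto
  have "hpiece d \<eta> (cyclic_point d \<eta> s) i < hpiece d \<eta> (cyclic_point d \<eta> s) (r + 1)"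
  proof (cases "i \<le> r")
    case True
    \<comment> \<open>coordinate \<open>i\<close> is one increment ahead, which outweighs any difference of offsets\<close>
    have "hpiece d \<eta> (cyclic_point d \<eta> s) i = 1 / sqrt d - \<eta> * (real q + 1) - \<eta> * real i / (4 * real d)"
      using True assms unfolding hpiece_def cyclic_point_def cyclic_count_def q_def r_def by auto
    moreover have "\<eta> * real (r + 1) / (4 * real d) \<le> \<eta> / 4"
    proof -
      have "\<eta> * real (r + 1) \<le> \<eta> * real d" using rd assms(1) by simp
      then show ?thesis using dpos by (simp add: field_simps)
    qed
    moreover have "\<eta> * real i / (4 * real d) \<ge> 0" using assms dpos by simp
    moreover have "\<eta> * (real q + 1) = \<eta> * real q + \<eta>" by (simp add: algebra_simps)
    ultimately show ?thesis using assms(1) next_piece by linarith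
  next
    case False
    then have "real (r + 1) < real i" using assms(3) unfolding r_def by auto
    then have "\<eta> * real (r + 1) / (4 * real d) < \<eta> * real i / (4 * real d)"
      using assms(1) dpos by (simp add: divide_strict_right_mono)
    moreover have "hpiece d \<eta> (cyclic_point d \<eta> s) i = 1 / sqrt d - \<eta> * real q - \<eta> * real i / (4 * real d)"
      using False assms unfolding hpiece_def cyclic_point_def cyclic_count_def q_def r_def by auto
    ultimately show ?thesis using next_piece by linarith
  qed
  then show ?thesis unfolding r_def .
qed

lemma hardgrad_cyclic_point:
  assumes "d \<ge> 1" "\<eta> > 0"
  shows "hardgrad d \<eta> (cyclic_point d \<eta> s) =
     (if hpiece d \<eta> (cyclic_point d \<eta> s) (s mod d + 1) > 0
      then (\<lambda>i. if i = s mod d + 1 then -1 else 0) else (\<lambda>_. 0))"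
proof -
  let ?h = "hpiece d \<eta> (cyclic_point d \<eta> s)"
  let ?j = "s mod d + 1"
  have j: "?j \<in> {1..d}" using assms by (simp add: Suc_leI)
  have "Max (?h ` {1..d}) = ?h ?j"
  proof (rule Max_eqI)
    fix y assume "y \<in> ?h ` {1..d}"
    then obtain i where "i \<in> {1..d}" "y = ?h i" by blast
    then show "y \<le> ?h ?j" using hpiece_cyclic_point_less[OF assms(2), of i d s] by (cases "i = ?j") auto
  qed (use j in auto)
  moreover have "(LEAST i. i \<in> {1..d} \<and> ?h i = ?h ?j) = ?j"
  proof (rule Least_equality)
    fix i assume "i \<in> {1..d} \<and> ?h i = ?h ?j"
    then show "?j \<le> i" using hpiece_cyclic_point_less[OF assms(2), of i d s] by (cases "i = ?j") auto
  qed (use j in simp)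
  ultimately show ?thesis unfolding hardgrad_def Let_def by simp
qed

lemma gd_step_cyclic_point:
  assumes "d \<ge> 1" "\<eta> > 0"
  shows "(\<lambda>i. cyclic_point d \<eta> s i - \<eta> * hardgrad d \<eta> (cyclic_point d \<eta> s) i) =
     (if hpiece d \<eta> (cyclic_point d \<eta> s) (s mod d + 1) > 0
      then cyclic_point d \<eta> (Suc s) else cyclic_point d \<eta> s)"
proof -
  have "Suc (s mod d) \<le> d" using assms by (simp add: Suc_leI)
  then show ?thesis unfolding hardgrad_cyclic_point[OF assms]
    by (auto simp: fun_eq_iff cyclic_point_def cyclic_count_Suc algebra_simps)
qed

lemma gd_iterates_cyclic:
  assumes "d \<ge> 1" "\<eta> > 0" and start: "w 1 = (\<lambda>_. 0)"
    and step: "\<And>t. 1 \<le> t \<Longrightarrow> t < T \<Longrightarrow> w (Suc t) = (\<lambda>i. w t i - \<eta> * hardgrad d \<eta> (w t) i)"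
  shows "1 \<le> t \<Longrightarrow> t \<le> T \<Longrightarrow> \<exists>s<t. w t = cyclic_point d \<eta> s"
proof (induction t)
  case 0
  then show ?case by simp
next
  case (Suc t)
  show ?case
  proof (cases "t = 0")
    case True
    have "cyclic_point d \<eta> 0 = (\<lambda>_. 0)" unfolding cyclic_point_def cyclic_count_def by auto
    then show ?thesis using True start by auto
  next
    case False
    then obtain s where "s < t" and ws: "w t = cyclic_point d \<eta> s" using Suc by auto
    moreover have "w (Suc t) = (if hpiece d \<eta> (cyclic_point d \<eta> s) (s mod d + 1) > 0
        then cyclic_point d \<eta> (Suc s) else cyclic_point d \<eta> s)"
      using step[of t] False Suc.prems ws gd_step_cyclic_point[OF assms(1,2)] by simp
    ultimately show ?thesis by (metis Suc_mono less_SucI)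
  qed
qed

lemma eucl_norm_cyclic_point_le:
  assumes "\<eta> \<ge> 0"
  shows "eucl_norm d (cyclic_point d \<eta> s) \<le> sqrt (real d) * (\<eta> * (real (s div d) + 1))"
proof -
  have coord: "(cyclic_point d \<eta> s i)^2 \<le> (\<eta> * (real (s div d) + 1))^2" for i
  proof -
    have "real (cyclic_count d s i) \<le> real (s div d) + 1" unfolding cyclic_count_def by simp
    then have "\<eta> * real (cyclic_count d s i) \<le> \<eta> * (real (s div d) + 1)"
      using assms by (rule mult_left_mono)
    moreover have "0 \<le> \<eta> * (real (s div d) + 1)" using assms by simp
    ultimately have "0 \<le> cyclic_point d \<eta> s i \<and> cyclic_point d \<eta> s i \<le> \<eta> * (real (s div d) + 1)"
      using assms unfolding cyclic_point_def by simp
    then show ?thesis by (intro power_mono) auto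
  qed
  have "(\<Sum>i=1..d. (cyclic_point d \<eta> s i)^2) \<le> of_nat (card {1..d}) * (\<eta> * (real (s div d) + 1))^2"
    by (rule sum_bounded_above) (rule coord)
  then have "(\<Sum>i=1..d. (cyclic_point d \<eta> s i)^2) \<le> real d * (\<eta> * (real (s div d) + 1))^2" by simp
  then have "eucl_norm d (cyclic_point d \<eta> s) \<le> sqrt (real d * (\<eta> * (real (s div d) + 1))^2)"
    unfolding eucl_norm_def by (rule real_sqrt_le_mono)
  then show ?thesis using assms by (simp add: real_sqrt_mult)
qed

lemma mult_div_le_of_le:
  assumes "s \<le> n"
  shows "real d * real (s div d) \<le> real n"
proof -
  have "d * (s div d) \<le> n" using assms times_div_less_eq_dividend[of d s] by linarith
  then show ?thesis by (metis of_nat_le_iff of_nat_mult)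
qed

lemma cyclic_point_last_le:
  assumes "d \<ge> 1" "\<eta> \<ge> 0" "s \<le> n"
  shows "cyclic_point d \<eta> s d \<le> \<eta> * real n / real d"
proof -
  have "\<not> d \<le> s mod d" using assms by (simp add: not_le)
  then have "cyclic_point d \<eta> s d = \<eta> * real (s div d)"
    using assms unfolding cyclic_point_def cyclic_count_def by simp
  moreover have "real (s div d) \<le> real n / real d"
    using mult_div_le_of_le[OF assms(3)] assms(1) by (simp add: field_simps)
  then have "\<eta> * real (s div d) \<le> \<eta> * (real n / real d)" using assms(2) by (rule mult_left_mono)
  ultimately show ?thesis by simp
qed

lemma sqrt_max_square:
  assumes "u \<ge> 0" "real d = max (u^2) 1"
  shows "sqrt (real d) = max u 1"
proof -
  have "max (u^2) 1 = (max u 1)^2"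
    using assms(1) by (cases "u \<le> 1") (auto simp: max_def power_le_one_iff)
  then show ?thesis using assms by simp
qed

lemma cyclic_point_norm_le_one:
  assumes "0 \<le> \<eta>" "\<eta> \<le> 1/5" "\<eta>^2 * real T \<le> 1/25"
    and r: "sqrt (real d) = max (5 * \<eta> * real T) 1" and "s \<le> T"
  shows "eucl_norm d (cyclic_point d \<eta> s) \<le> 1"
proof -
  let ?r = "sqrt (real d)" and ?q = "real (s div d)"
  have r1: "?r \<ge> 1" and r5: "5 * \<eta> * real T \<le> ?r" using r by auto
  have "?r * (?r * (\<eta> * ?q)) = \<eta> * ((?r * ?r) * ?q)" by (simp only: ac_simps)
  also have "\<dots> = \<eta> * (real d * ?q)" by simp
  also have "\<dots> \<le> \<eta> * real T" using mult_div_le_of_le[OF assms(5)] assms(1) by (rule mult_left_mono)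
  also have "\<dots> \<le> ?r * (1/5)" using r5 by simp
  finally have full_rounds: "?r * (\<eta> * ?q) \<le> 1/5" using r1 by simp
  have last_round: "?r * \<eta> \<le> 1/5"
  proof (cases "5 * \<eta> * real T \<le> 1")
    case True
    then show ?thesis using r assms(2) by simp
  next
    case False
    then have "?r * \<eta> = 5 * (\<eta>^2 * real T)" using r by (simp add: power2_eq_square)
    then show ?thesis using assms(3) by simp
  qed
  have "eucl_norm d (cyclic_point d \<eta> s) \<le> ?r * (\<eta> * ?q) + ?r * \<eta>"
    using eucl_norm_cyclic_point_le[OF assms(1)] by (simp add: algebra_simps)
  then show ?thesis using full_rounds last_round by linarith
qed

lemma hpiece_le_hardf:
  assumes "i \<in> {1..d}"
  shows "hpiece d \<eta> w i \<le> hardf d \<eta> w"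
proof -
  have "hpiece d \<eta> w i \<le> Max (hpiece d \<eta> w ` {1..d})" using assms by (intro Max_ge) auto
  then show ?thesis unfolding hardf_def by simp
qed

lemma INF_hardf:
  assumes "d \<ge> 1" "\<eta> > 0"
  shows "(INF v. hardf d \<eta> v) = 0"
proof -
  have nonneg: "hardf d \<eta> v \<ge> 0" for v unfolding hardf_def by simp
  have "hpiece d \<eta> (\<lambda>_. 1) i < 0" if "i \<in> {1..d}" for i
  proof -
    have "1 / sqrt (real d) \<le> 1" and "\<eta> * real i / (4 * real d) > 0" using assms that by auto
    then show ?thesis unfolding hpiece_def by linarith
  qed
  moreover have "Max (hpiece d \<eta> (\<lambda>_. 1) ` {1..d}) \<in> hpiece d \<eta> (\<lambda>_. 1) ` {1..d}"
    using assms(1) by (intro Max_in) auto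
  ultimately have "hardf d \<eta> (\<lambda>_. 1) = 0" unfolding hardf_def by force
  moreover have "(INF v. hardf d \<eta> v) \<le> hardf d \<eta> (\<lambda>_. 1)"
    by (rule cINF_lower) (auto intro: bdd_belowI[of _ 0] simp: nonneg)
  moreover have "(INF v. hardf d \<eta> v) \<ge> 0" by (rule cINF_greatest) (auto simp: nonneg)
  ultimately show ?thesis by linarith
qed

lemma gap_lower_bound:
  assumes "0 < \<eta>" "\<eta> \<le> 1/5" "\<eta>^2 * real T \<le> 1/25"
    and r: "sqrt (real d) = max (5 * \<eta> * real T) 1"
  shows "min (1/4) (1 / (20 * \<eta> * real T)) \<le> 1 / sqrt (real d) - \<eta> * (real T - 1) / real d - \<eta> / 4"
proof -
  define r where "r = sqrt (real d)"
  have r1: "r \<ge> 1" and r5: "5 * \<eta> * real T \<le> r" using assms unfolding r_def by auto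
  have "\<eta> * (real T - 1) \<le> r / 5"
    using r5 assms(1) by (simp add: right_diff_distrib)
  then have "\<eta> * (real T - 1) / real d \<le> r / 5 / real d" by (rule divide_right_mono) simp
  also have "\<dots> = 1 / (5 * r)"
  proof -
    have "real d = r * r" unfolding r_def by simp
    then show ?thesis using r1 by (simp add: field_simps)
  qed
  finally have drift: "\<eta> * (real T - 1) / real d \<le> 1 / (5 * r)" .
  show ?thesis
  proof (cases "5 * \<eta> * real T \<le> 1")
    case True
    then have "r = 1" using r unfolding r_def by simp
    then have "1/4 \<le> 1 / sqrt (real d) - \<eta> * (real T - 1) / real d - \<eta> / 4"
      using drift assms(2) unfolding r_def by simp
    then show ?thesis by (simp add: min_le_iff_disj)
  next
    case False
    then have rT: "r = 5 * (\<eta> * real T)" and pos: "\<eta> * real T > 0"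
      using r assms(1) unfolding r_def by auto
    have "\<eta> / 4 \<le> 1 / (100 * (\<eta> * real T))"
      using assms(3) pos by (simp add: field_simps power2_eq_square)
    moreover have "1 / r - 1 / (5 * r) = 4 / (25 * (\<eta> * real T))" unfolding rT by simp
    moreover have "4 / (25 * (\<eta> * real T)) - 1 / (100 * (\<eta> * real T)) \<ge> 1 / (20 * (\<eta> * real T))"
      using pos by (simp add: field_simps)
    ultimately show ?thesis using drift unfolding r_def[symmetric]
      by (simp add: min_le_iff_disj mult.assoc)
  qed
qed

lemma hardf_average_ge:
  assumes "d \<ge> 1" "m \<ge> 1" and last: "\<And>k. k \<in> {1..m} \<Longrightarrow> v k d \<le> c"
  shows "1 / sqrt (real d) - c - \<eta> / 4 \<le> hardf d \<eta> (\<lambda>i. (1 / real m) * (\<Sum>k=1..m. v k i))"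
proof -
  define g where "g = (\<lambda>i. (1 / real m) * (\<Sum>k=1..m. v k i))"
  have "(\<Sum>k=1..m. v k d) \<le> of_nat (card {1..m}) * c" by (rule sum_bounded_above) (rule last)
  then have "g d \<le> c" using assms(2) unfolding g_def by (simp add: pos_divide_le_eq mult.commute)
  moreover have "hpiece d \<eta> g d \<le> hardf d \<eta> g" using assms(1) by (intro hpiece_le_hardf) simp
  ultimately show ?thesis using assms(1) unfolding hpiece_def g_def by simp
qed

lemma step_size_bounds:
  assumes "T \<ge> 1" "0 < \<eta>" "\<eta> \<le> 1 / (5 * sqrt (real T))"
  shows "\<eta> \<le> 1/5" and "\<eta>^2 * real T \<le> 1/25"
proof -
  have five: "5 * \<eta> * sqrt (real T) \<le> 1" and sqrtT: "sqrt (real T) \<ge> 1"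
    using assms by (simp_all add: field_simps)
  moreover have "5 * \<eta> \<le> 5 * \<eta> * sqrt (real T)" using sqrtT assms(2) by simp
  ultimately show "\<eta> \<le> 1/5" by linarith
  have "(5 * \<eta> * sqrt (real T))^2 \<le> 1" using five assms(2) by (simp add: power_le_one)
  then show "\<eta>^2 * real T \<le> 1/25" by (simp add: power_mult_distrib)
qed

theorem mainTheorem13:
  fixes T d :: nat and \<eta> :: real and w :: "nat \<Rightarrow> nat \<Rightarrow> real"
  assumes "T \<ge> 1"
    and "0 < \<eta>" and "\<eta> \<le> 1 / (5 * sqrt (real T))"
    and "real d = max (25 * \<eta>^2 * (real T)^2) 1"
    and "w 1 = (\<lambda>_. 0)"
    and "\<And>t. 1 \<le> t \<Longrightarrow> t < T \<Longrightarrow>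
           w (Suc t) = (\<lambda>i. w t i - \<eta> * hardgrad d \<eta> (w t) i)"
  shows "(\<forall>t\<in>{1..T}. eucl_norm d (w t) \<le> 1) \<and>
         (\<forall>m\<in>{1..T}.
            hardf d \<eta> (\<lambda>i. (1 / real m) * (\<Sum>k=1..m. w (T - k + 1) i))
              - (INF v. hardf d \<eta> v)
            \<ge> min (1/4) (1 / (20 * \<eta> * real T)))"
proof -
  have "real d \<ge> 1" using assms(4) by simp
  then have d1: "d \<ge> 1" by simp
  note eta = step_size_bounds[OF assms(1-3)]
  have r: "sqrt (real d) = max (5 * \<eta> * real T) 1"
    using assms(2,4) by (intro sqrt_max_square) (simp_all add: power_mult_distrib)
  have iterate: "\<exists>s\<le>T - 1. w t = cyclic_point d \<eta> s" if t: "t \<in> {1..T}" for t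
  proof -
    obtain s where "s < t" "w t = cyclic_point d \<eta> s"
      using gd_iterates_cyclic[of d \<eta> w T t] d1 assms(2,5,6) t by auto
    then show ?thesis using t by (intro exI[of _ s]) auto
  qed
  have norm: "eucl_norm d (w t) \<le> 1" if "t \<in> {1..T}" for t
    using iterate[OF that] cyclic_point_norm_le_one[OF _ eta r] assms(2) by fastforce
  have last_coord: "w (T - k + 1) d \<le> \<eta> * (real T - 1) / real d" if "k \<in> {1..T}" for k
    using iterate[of "T - k + 1"] that cyclic_point_last_le[OF d1, of \<eta> _ "T - 1"] assms(1,2)
    by (fastforce simp: of_nat_diff)
  have gap: "min (1/4) (1 / (20 * \<eta> * real T)) \<le>
      hardf d \<eta> (\<lambda>i. (1 / real m) * (\<Sum>k=1..m. w (T - k + 1) i))" if m: "m \<in> {1..T}" for m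
    using hardf_average_ge[OF d1, of m "\<lambda>k. w (T - k + 1)" "\<eta> * (real T - 1) / real d" \<eta>]
      last_coord m gap_lower_bound[OF assms(2) eta r] by force
  show ?thesis using norm gap INF_hardf[OF d1 assms(2)] by auto
qed

end
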